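(* Let $k\ge 2$, $\tau=1000k$, $\rho=1-\frac{1}{10\tau}$, and let $g:\{0,1\}^n\to\{0,1\}$ be a $k$-term DNF. If $y^0\in\{0,1\}^n$ satisfies $g_{\le 1000\tau\log k}(y^0)=0$, then $T_\rho g(y^0)\le 0.1$.
   Context: $g_{\le L}$ is the sub-DNF of $g$ consisting of terms with at most $L$ literals. For $x\in\{0,1\}^n$, $\mathbf{y}\sim N_\rho(x)$ means each bit independently has $\mathbf{y}_i=x_i$ with probability $\rho$ and $\mathbf{y}_i=1-x_i$ with probability $1-\rho$. The noise operator is $T_\rho g(x)=\mathbb{E}_{\mathbf{y}\sim N_\rho(x)}[g(\mathbf{y})]$. *)

theory Defs
  imports Complex_Main
begin

(* A literal (i, b) asserts x_i = b.  A term is a finite set of literals,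
   a DNF is a finite set of terms; it evaluates to 1 iff some term is satisfied. *)
type_synonym lit = "nat \<times> bool"

definition term_sat :: "lit set \<Rightarrow> (nat \<Rightarrow> bool) \<Rightarrow> bool" where
  "term_sat t x \<longleftrightarrow> (\<forall>(i, b) \<in> t. x i = b)"

definition dnf_eval :: "lit set set \<Rightarrow> (nat \<Rightarrow> bool) \<Rightarrow> real" where
  "dnf_eval F x = (if \<exists>t \<in> F. term_sat t x then 1 else 0)"

definition is_k_term_dnf :: "nat \<Rightarrow> nat \<Rightarrow> lit set set \<Rightarrow> bool" where
  "is_k_term_dnf n k F \<longleftrightarrow> finite F \<and> card F \<le> k \<and>
     (\<forall>t \<in> F. finite t \<and> (\<forall>(i, b) \<in> t. i < n))"

definition sub_dnf :: "lit set set \<Rightarrow> real \<Rightarrow> lit set set" where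
  "sub_dnf F L = {t \<in> F. real (card t) \<le> L}"

definition flip :: "(nat \<Rightarrow> bool) \<Rightarrow> nat set \<Rightarrow> (nat \<Rightarrow> bool)" where
  "flip x S = (\<lambda>i. if i \<in> S then \<not> x i else x i)"

(* T_rho g(x) = E_{y ~ N_rho(x)} g(y) on {0,1}^n: each bit is flipped
   independently with probability 1 - rho; S is the set of flipped bits. *)
definition noise_op :: "nat \<Rightarrow> real \<Rightarrow> ((nat \<Rightarrow> bool) \<Rightarrow> real) \<Rightarrow> (nat \<Rightarrow> bool) \<Rightarrow> real" where
  "noise_op n \<rho> g x =
     (\<Sum>S \<in> Pow {..<n}. (1 - \<rho>) ^ card S * \<rho> ^ (n - card S) * g (flip x S))"

end

theory Submission
  imports Defs
begin

(* A DNF is bounded by the sum of its term indicators, so T_rho g(y0) is at most the sum over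
   the terms of the probability that the noisy point satisfies the term.  The coordinates of the
   noisy point are independent, so that probability is a product over the variables.  A term with
   at most L literals is falsified by y0, so satisfying it forces one particular bit to flip, which
   has probability 1 - rho = 1/(10000 k).  A longer term mentions more than L/2 distinct
   variables, each taking the required value with probability at most rho, which gives
   rho^(L/2) <= k^-50.  Hence each of the at most k terms contributes at most 1/(20 k). *)

lemma flip_insert:
  "flip x (insert m S) = flip (x(m := \<not> x m)) S" if "m \<notin> S"
  using that by (auto simp: flip_def)

lemma noise_op_Suc:
  "noise_op (Suc n) \<rho> g x
    = \<rho> * noise_op n \<rho> g x + (1 - \<rho>) * noise_op n \<rho> g (x(n := \<not> x n))"
proof -
  let ?w = "\<lambda>S. (1 - \<rho>) ^ card S * \<rho> ^ (Suc n - card S)"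
  have inj: "inj_on (insert n) (Pow {..<n})"
    by (rule inj_onI) (metis Diff_insert_absorb PowD lessThan_iff less_irrefl subsetD)
  have card_le: "card S \<le> n" and card_insert: "card (insert n S) = Suc (card S)"
    and n_notin: "n \<notin> S" if "S \<in> Pow {..<n}" for S
    using that card_mono[of "{..<n}" S] by (auto simp: finite_subset card_insert_if)
  have "noise_op (Suc n) \<rho> g x
      = (\<Sum>S \<in> Pow {..<n}. ?w S * g (flip x S))
        + (\<Sum>S \<in> insert n ` Pow {..<n}. ?w S * g (flip x S))"
    unfolding noise_op_def lessThan_Suc Pow_insert by (rule sum.union_disjoint) auto
  also have "(\<Sum>S \<in> Pow {..<n}. ?w S * g (flip x S)) = \<rho> * noise_op n \<rho> g x"
    unfolding noise_op_def sum_distrib_left by (rule sum.cong) (auto simp: card_le Suc_diff_le)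
  also have "(\<Sum>S \<in> insert n ` Pow {..<n}. ?w S * g (flip x S))
      = (\<Sum>S \<in> Pow {..<n}. ?w (insert n S) * g (flip x (insert n S)))"
    by (rule sum.reindex[OF inj, unfolded comp_def])
  also have "\<dots> = (1 - \<rho>) * noise_op n \<rho> g (x(n := \<not> x n))"
    unfolding noise_op_def sum_distrib_left
    by (rule sum.cong) (simp_all add: card_insert flip_insert n_notin)
  finally show ?thesis .
qed

lemma noise_op_mono:
  assumes "0 \<le> \<rho>" "\<rho> \<le> 1" "\<And>y. g y \<le> h y"
  shows "noise_op n \<rho> g x \<le> noise_op n \<rho> h x"
  unfolding noise_op_def using assms by (intro sum_mono mult_left_mono) auto

lemma noise_op_sum:
  "noise_op n \<rho> (\<lambda>y. \<Sum>t\<in>F. g t y) x = (\<Sum>t\<in>F. noise_op n \<rho> (g t) x)"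
  unfolding noise_op_def by (simp add: sum_distrib_left sum.swap[of _ F])

lemma noise_op_prod:
  "noise_op n \<rho> (\<lambda>y. \<Prod>i<n. h i (y i)) x
    = (\<Prod>i<n. (1 - \<rho>) * h i (\<not> x i) + \<rho> * h i (x i))"
proof (induction n arbitrary: x)
  case 0
  then show ?case by (simp add: noise_op_def)
next
  case (Suc n)
  let ?x' = "x(n := \<not> x n)"
  have fixed: "noise_op n \<rho> (\<lambda>y. \<Prod>i<Suc n. h i (y i)) z
      = h n (z n) * noise_op n \<rho> (\<lambda>y. \<Prod>i<n. h i (y i)) z" for z
    unfolding noise_op_def sum_distrib_left
    by (rule sum.cong) (auto simp: flip_def mult_ac)
  have "(\<Prod>i<n. (1 - \<rho>) * h i (\<not> ?x' i) + \<rho> * h i (?x' i))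
      = (\<Prod>i<n. (1 - \<rho>) * h i (\<not> x i) + \<rho> * h i (x i))"
    by (rule prod.cong) auto
  then show ?case
    unfolding noise_op_Suc fixed Suc by (simp add: algebra_simps)
qed

lemma prod_of_bool:
  "finite A \<Longrightarrow> (\<Prod>x\<in>A. of_bool (P x)) = (of_bool (\<forall>x\<in>A. P x) :: 'a :: comm_semiring_1)"
  by (induction rule: finite_induct) auto

lemma term_sat_iff_no_opposite_lit:
  assumes "\<forall>(i, b) \<in> t. i < n"
  shows "term_sat t y \<longleftrightarrow> (\<forall>i<n. (i, \<not> y i) \<notin> t)"
proof
  assume "term_sat t y"
  then show "\<forall>i<n. (i, \<not> y i) \<notin> t"
    unfolding term_sat_def by fastforce
next
  assume no_opposite: "\<forall>i<n. (i, \<not> y i) \<notin> t"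
  show "term_sat t y"
    unfolding term_sat_def
  proof (clarify)
    fix i b
    assume lit: "(i, b) \<in> t"
    with assms have "i < n"
      by auto
    with no_opposite lit show "y i = b"
      by (cases b; cases "y i") auto
  qed
qed

lemma noise_op_term_sat:
  assumes "\<forall>(i, b) \<in> t. i < n"
  shows "noise_op n \<rho> (\<lambda>y. of_bool (term_sat t y)) x
    = (\<Prod>i<n. (1 - \<rho>) * of_bool ((i, x i) \<notin> t) + \<rho> * of_bool ((i, \<not> x i) \<notin> t))"
proof -
  have "of_bool (term_sat t y) = (\<Prod>i<n. of_bool ((i, \<not> y i) \<notin> t) :: real)" for y
    using term_sat_iff_no_opposite_lit[OF assms] by (auto simp: prod_of_bool)
  then show ?thesis
    using noise_op_prod[of n \<rho> "\<lambda>i v. of_bool ((i, \<not> v) \<notin> t)" x] by simp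
qed

lemma prod_le_power_card:
  fixes f :: "'a \<Rightarrow> real"
  assumes "finite I" "V \<subseteq> I"
    and "\<And>i. i \<in> I \<Longrightarrow> 0 \<le> f i \<and> f i \<le> 1" "\<And>i. i \<in> V \<Longrightarrow> f i \<le> q"
  shows "(\<Prod>i\<in>I. f i) \<le> q ^ card V"
proof -
  have "(\<Prod>i\<in>I. f i) \<le> (\<Prod>i\<in>I. if i \<in> V then q else 1)"
    using assms by (intro prod_mono) auto
  also have "\<dots> = q ^ card V"
    using assms(1,2) by (simp add: prod.If_cases Int_absorb1)
  finally show ?thesis .
qed

lemma noise_op_unsat_term_le:
  assumes "0 \<le> \<rho>" "\<rho> \<le> 1" "\<forall>(i, b) \<in> t. i < n" "\<not> term_sat t x"
  shows "noise_op n \<rho> (\<lambda>y. of_bool (term_sat t y)) x \<le> 1 - \<rho>"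
proof -
  obtain i where i: "i < n" "(i, \<not> x i) \<in> t"
    using assms(3,4) term_sat_iff_no_opposite_lit by blast
  have "(\<Prod>i<n. (1 - \<rho>) * of_bool ((i, x i) \<notin> t) + \<rho> * of_bool ((i, \<not> x i) \<notin> t))
      \<le> (1 - \<rho>) ^ card {i}"
    using assms(1,2) i by (intro prod_le_power_card) auto
  then show ?thesis
    by (simp add: noise_op_term_sat[OF assms(3)])
qed

lemma noise_op_term_le_power:
  assumes "1 - \<rho> \<le> \<rho>" "\<rho> \<le> 1" "\<forall>(i, b) \<in> t. i < n"
  shows "noise_op n \<rho> (\<lambda>y. of_bool (term_sat t y)) x \<le> \<rho> ^ card (fst ` t)"
  unfolding noise_op_term_sat[OF assms(3)]
proof (rule prod_le_power_card)
  show "fst ` t \<subseteq> {..<n}"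
    using assms(3) by force
  show "(1 - \<rho>) * of_bool ((i, x i) \<notin> t) + \<rho> * of_bool ((i, \<not> x i) \<notin> t) \<le> \<rho>"
    if i: "i \<in> fst ` t" for i
  proof -
    obtain b where "(i, b) \<in> t"
      using i by force
    then have "(i, x i) \<in> t \<or> (i, \<not> x i) \<in> t"
      by (cases b; cases "x i") auto
    then show ?thesis
      using assms(1,2) by auto
  qed
qed (use assms(1,2) in auto)

lemma card_le_twice_card_fst:
  fixes t :: "('a \<times> bool) set"
  assumes "finite t"
  shows "card t \<le> 2 * card (fst ` t)"
proof -
  have "card t \<le> card (fst ` t \<times> (UNIV :: bool set))"
    using assms by (intro card_mono) force+
  then show ?thesis
    by (simp add: card_cartesian_product)
qed

lemma dnf_eval_le_sum_terms:
  assumes "finite F"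
  shows "dnf_eval F y \<le> (\<Sum>t\<in>F. of_bool (term_sat t y))"
proof (cases "\<exists>t\<in>F. term_sat t y")
  case True
  then obtain t where "t \<in> F" "term_sat t y" by blast
  then have "of_bool (term_sat t y) \<le> (\<Sum>t\<in>F. of_bool (term_sat t y) :: real)"
    using assms by (intro member_le_sum) auto
  then show ?thesis
    using True \<open>term_sat t y\<close> by (simp add: dnf_eval_def)
qed (simp add: dnf_eval_def sum_nonneg)

lemma noise_op_dnf_le_sum_terms:
  assumes "0 \<le> \<rho>" "\<rho> \<le> 1" "finite F"
  shows "noise_op n \<rho> (dnf_eval F) x \<le> (\<Sum>t\<in>F. noise_op n \<rho> (\<lambda>y. of_bool (term_sat t y)) x)"
  using noise_op_mono[OF assms(1,2) dnf_eval_le_sum_terms[OF assms(3)]]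
  by (simp add: noise_op_sum)

lemma power_one_minus_le_exp:
  fixes p :: real
  assumes "p \<le> 1"
  shows "(1 - p) ^ m \<le> exp (- (p * m))"
proof -
  have "(1 - p) ^ m \<le> exp (- p) ^ m"
    using assms exp_ge_add_one_self[of "- p"] by (intro power_mono) auto
  then show ?thesis
    by (simp add: exp_of_nat_mult[symmetric] mult_ac)
qed

lemma power_one_minus_inverse_10000k_le:
  fixes k m :: nat
  assumes "k \<ge> 2" "real m \<ge> 500000 * real k * log 2 (real k)"
  shows "(1 - 1 / (10000 * real k)) ^ m \<le> 1 / (20 * real k)"
proof -
  have k: "real k \<ge> 2"
    using assms(1) by simp
  have "ln (real k) \<le> log 2 (real k)"
    using k ln_le_minus_one[of 2] by (simp add: log_def le_divide_eq mult_left_le)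
  also have "\<dots> \<le> 1 / (10000 * real k) * real m / 50"
    using assms(2) k by (simp add: field_simps)
  finally have "exp (- (1 / (10000 * real k) * real m)) \<le> exp (- (50 * ln (real k)))"
    by simp
  moreover have "1 / (10000 * real k) \<le> 1"
    using k by simp
  ultimately have "(1 - 1 / (10000 * real k)) ^ m \<le> exp (- (50 * ln (real k)))"
    using power_one_minus_le_exp order_trans by blast
  also have "\<dots> = 1 / real k ^ 50"
    using k exp_of_nat_mult[of 50 "ln (real k)"] by (simp add: exp_minus divide_inverse)
  also have "\<dots> \<le> 1 / (20 * real k)"
  proof -
    have "20 * real k \<le> real k ^ 49 * real k"
      using k power_mono[of 2 "real k" 49] by simp
    then show ?thesis
      using k by (intro divide_left_mono) (auto simp: power_Suc2[symmetric])
  qed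
  finally show ?thesis .
qed

lemma noise_op_term_sat_le:
  fixes k :: nat
  assumes "k \<ge> 2" "\<rho> = 1 - 1 / (10000 * real k)"
    and "finite t" "\<forall>(i, b) \<in> t. i < n"
    and short_unsat: "real (card t) \<le> 1000000 * real k * log 2 (real k) \<Longrightarrow> \<not> term_sat t x"
  shows "noise_op n \<rho> (\<lambda>y. of_bool (term_sat t y)) x \<le> 1 / (20 * real k)"
proof -
  have k: "real k \<ge> 2"
    using assms(1) by simp
  have flip_prob: "1 - \<rho> \<le> 1 / (20 * real k)"
    unfolding assms(2) using k by (simp add: divide_left_mono)
  moreover have "1 / (20 * real k) \<le> 1 / 2"
    using k by simp
  ultimately have \<rho>: "0 \<le> \<rho>" "\<rho> \<le> 1" "1 - \<rho> \<le> \<rho>"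
    using k by (auto simp: assms(2))
  show ?thesis
  proof (cases "real (card t) \<le> 1000000 * real k * log 2 (real k)")
    case True
    have "noise_op n \<rho> (\<lambda>y. of_bool (term_sat t y)) x \<le> 1 - \<rho>"
      by (rule noise_op_unsat_term_le[OF \<rho>(1,2) assms(4) short_unsat[OF True]])
    with flip_prob show ?thesis
      by linarith
  next
    case False
    have "real (card t) \<le> 2 * real (card (fst ` t))"
      using card_le_twice_card_fst[OF assms(3)] by linarith
    then have "real (card (fst ` t)) \<ge> 500000 * real k * log 2 (real k)"
      using False by linarith
    then have "\<rho> ^ card (fst ` t) \<le> 1 / (20 * real k)"
      unfolding assms(2) by (rule power_one_minus_inverse_10000k_le[OF assms(1)])
    then show ?thesis
      using noise_op_term_le_power[OF \<rho>(3,2) assms(4)] by (rule order_trans[rotated])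
  qed
qed

theorem claim6p5:
  fixes n k :: nat and F :: "lit set set" and y0 :: "nat \<Rightarrow> bool"
  assumes "k \<ge> 2"
    and "is_k_term_dnf n k F"
    and "dnf_eval (sub_dnf F (1000 * (1000 * real k) * log 2 (real k))) y0 = 0"
  shows "noise_op n (1 - 1 / (10 * (1000 * real k))) (dnf_eval F) y0 \<le> 0.1"
proof -
  define \<rho> where "\<rho> = 1 - 1 / (10 * (1000 * real k))"
  have k: "real k \<ge> 2"
    using assms(1) by simp
  have F: "finite F" "card F \<le> k" "\<And>t. t \<in> F \<Longrightarrow> finite t \<and> (\<forall>(i, b) \<in> t. i < n)"
    using assms(2) unfolding is_k_term_dnf_def by auto
  have short_unsat: "\<not> term_sat t y0"
    if "t \<in> F" "real (card t) \<le> 1000 * (1000 * real k) * log 2 (real k)" for t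
    using assms(3) that by (auto simp: dnf_eval_def sub_dnf_def split: if_splits)
  have "noise_op n \<rho> (dnf_eval F) y0 \<le> (\<Sum>t\<in>F. noise_op n \<rho> (\<lambda>y. of_bool (term_sat t y)) y0)"
    using k F(1) by (intro noise_op_dnf_le_sum_terms) (auto simp: \<rho>_def)
  also have "\<dots> \<le> (\<Sum>t\<in>F. 1 / (20 * real k))"
    using assms(1) F(3) short_unsat by (intro sum_mono noise_op_term_sat_le) (auto simp: \<rho>_def)
  also have "\<dots> \<le> real k / (20 * real k)"
    using F(2) k by (simp add: divide_right_mono)
  also have "\<dots> \<le> 0.1"
    using k by simp
  finally show ?thesis
    by (simp add: \<rho>_def)
qed

end
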